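(* Let $n\ge 1$, let $\rho\in(0,1)$, $\alpha\ge 0$, and let $F:\mathbb{R}^n\to\mathbb{R}^n$ be $\rho$-Lipschitz (Euclidean norm). Assume there exist a symmetric positive semidefinite matrix $G\in\mathbb{R}^{n\times n}$ with $G\preccurlyeq \rho I$ and an $\alpha$-Lipschitz map $\xi:\mathbb{R}^n\to\mathbb{R}^n$ such that $F(x)=Gx+\xi(x)$ for all $x$. Let $C\ge 1$, let $k\ge 1$ be an integer, let $x_0\in\mathbb{R}^n$, and let $x_e$ be the output of the Constrained Anderson Acceleration procedure (described in the context) started at $x_0$ with parameters $C$ and $k$. Then $$\|F(x_e)-x_e\|\le\Big(\max_{x\in[0,\rho]}|p_*(x)|+3C\alpha k\Big)\|F(x_0)-x_0\|,$$ where $p_*$ is any minimizer of $\max_{x\in[0,\rho]}|p(x)|$ over all $p\in\mathbb{R}_k[X]$ with $p(1)=1$ and $\|p\|_1\le C$.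
   Context: $\|\cdot\|$ denotes the Euclidean norm on $\mathbb{R}^n$. $\mathbb{R}_k[X]$ is the space of real polynomials of degree at most $k$, and for $p=\sum_{i=0}^k p_iX^i$, $\|p\|_1=\sum_{i=0}^k|p_i|$ (the $\ell_1$ norm of the coefficient vector); for a vector $c$, $\|c\|_1=\sum_i|c_i|$. Constrained Anderson Acceleration (CAA) with input $x_0$, constraint bound $C$ and integer $k$: set $x_{i+1}=F(x_i)$ for $i=0,\dots,k$; form the matrix $R=[x_0-x_1,\ x_1-x_2,\ \dots,\ x_k-x_{k+1}]\in\mathbb{R}^{n\times(k+1)}$; compute $\tilde c\in\arg\min\{\|Rc\| : c\in\mathbb{R}^{k+1},\ \mathbf{1}^Tc=1,\ \|c\|_1\le C\}$; output $x_e=\sum_{i=0}^k\tilde c_i x_i$. *)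

theory Defs
  imports "HOL-Analysis.Analysis" "HOL-Computational_Algebra.Polynomial"
begin

definition caa_iter :: "('a \<Rightarrow> 'a) \<Rightarrow> 'a \<Rightarrow> nat \<Rightarrow> 'a" where
  "caa_iter F x0 i = (F ^^ i) x0"

definition caa_residual :: "('a::real_vector \<Rightarrow> 'a) \<Rightarrow> 'a \<Rightarrow> nat \<Rightarrow> (nat \<Rightarrow> real) \<Rightarrow> 'a" where
  "caa_residual F x0 k c = (\<Sum>i\<le>k. c i *\<^sub>R (caa_iter F x0 i - caa_iter F x0 (Suc i)))"

definition caa_feasible :: "real \<Rightarrow> nat \<Rightarrow> (nat \<Rightarrow> real) \<Rightarrow> bool" where
  "caa_feasible C k c \<longleftrightarrow> (\<Sum>i\<le>k. c i) = 1 \<and> (\<Sum>i\<le>k. \<bar>c i\<bar>) \<le> C"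

definition caa_argmin :: "('a::real_normed_vector \<Rightarrow> 'a) \<Rightarrow> 'a \<Rightarrow> real \<Rightarrow> nat \<Rightarrow> (nat \<Rightarrow> real) \<Rightarrow> bool" where
  "caa_argmin F x0 C k c \<longleftrightarrow> caa_feasible C k c \<and>
     (\<forall>c'. caa_feasible C k c' \<longrightarrow> norm (caa_residual F x0 k c) \<le> norm (caa_residual F x0 k c'))"

definition caa_output :: "('a::real_vector \<Rightarrow> 'a) \<Rightarrow> 'a \<Rightarrow> nat \<Rightarrow> (nat \<Rightarrow> real) \<Rightarrow> 'a" where
  "caa_output F x0 k c = (\<Sum>i\<le>k. c i *\<^sub>R caa_iter F x0 i)"

definition poly_l1 :: "real poly \<Rightarrow> real" where
  "poly_l1 p = (\<Sum>i\<le>degree p. \<bar>coeff p i\<bar>)"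

definition poly_feasible :: "real \<Rightarrow> nat \<Rightarrow> real poly \<Rightarrow> bool" where
  "poly_feasible C k p \<longleftrightarrow> degree p \<le> k \<and> poly p 1 = 1 \<and> poly_l1 p \<le> C"

text \<open>max_{x in [0,rho]} |p(x)| (attained, since continuous on a compact interval).\<close>
definition sup_on_interval :: "real \<Rightarrow> real poly \<Rightarrow> real" where
  "sup_on_interval \<rho> p = (SUP x\<in>{0..\<rho>}. \<bar>poly p x\<bar>)"

end

theory Submission
  imports Defs
begin

(*
  Write r_i = x_i - x_(i+1). Since F = G + xi, the differences obey
  r_(i+1) = G r_i + (xi(x_i) - xi(x_(i+1))), so r_i stays within i alpha |r_0| of G^i r_0.
  Hence for the coefficient vector of a feasible polynomial p the CAA residual is p(G) r_0
  up to an error C k alpha |r_0|, and |p(G) r_0| <= max_[0,rho] |p| |r_0| because G is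
  symmetric with spectrum in [0, rho]; the latter is proved by peeling off unit eigenvectors,
  found as maximisers of the Rayleigh quotient, one invariant subspace at a time.
  Optimality of the CAA coefficients transfers the bound to their residual, and
  F(x_e) - x_e differs from minus that residual by xi(x_e) - sum_i c_i xi(x_i), which is at
  most 2 C alpha k |r_0| since all iterates lie within k |r_0| of x_0.
*)

definition poly_op :: "('a::real_vector \<Rightarrow> 'a) \<Rightarrow> real poly \<Rightarrow> 'a \<Rightarrow> 'a" where
  "poly_op g p v = (\<Sum>i\<le>degree p. coeff p i *\<^sub>R (g ^^ i) v)"

lemma sum_le_degree_extend:
  fixes f :: "nat \<Rightarrow> 'a::comm_monoid_add"
  assumes "degree p \<le> k" and "\<And>i. coeff p i = 0 \<Longrightarrow> f i = 0"
  shows "(\<Sum>i\<le>k. f i) = (\<Sum>i\<le>degree p. f i)"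
proof (rule sum.mono_neutral_right)
  show "\<forall>i\<in>{..k} - {..degree p}. f i = 0"
    using assms(2) by (simp add: coeff_eq_0)
qed (use assms(1) in auto)

lemma poly_op_eq_sum:
  "degree p \<le> k \<Longrightarrow> poly_op g p v = (\<Sum>i\<le>k. coeff p i *\<^sub>R (g ^^ i) v)"
  unfolding poly_op_def by (rule sum_le_degree_extend[symmetric]) auto

lemma linear_funpow:
  fixes g :: "'a::real_vector \<Rightarrow> 'a"
  assumes "linear g"
  shows "linear (g ^^ i)"
proof (induction i)
  case 0
  show ?case
    unfolding funpow.simps(1) by (rule linear_id)
next
  case (Suc i)
  show ?case
    unfolding funpow.simps(2) by (rule linear_compose[OF Suc assms])
qed

lemma linear_poly_op: "linear g \<Longrightarrow> linear (poly_op g p)"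
  unfolding poly_op_def
  by (intro linear_compose_sum ballI module_hom_scale linear_funpow)

lemma poly_op_in_subspace:
  assumes "subspace S" "g ` S \<subseteq> S" "v \<in> S"
  shows "poly_op g p v \<in> S"
proof -
  have "(g ^^ i) v \<in> S" for i
    by (induction i) (use assms in auto)
  then show ?thesis
    unfolding poly_op_def by (intro subspace_sum subspace_scale assms(1))
qed

lemma poly_op_eigenvector:
  assumes "linear g" "g u = l *\<^sub>R u"
  shows "poly_op g p u = poly p l *\<^sub>R u"
proof -
  have "(g ^^ i) u = (l ^ i) *\<^sub>R u" for i
    by (induction i) (use assms in \<open>auto simp: linear_scale\<close>)
  then show ?thesis
    by (simp add: poly_op_def poly_altdef scaleR_sum_left)
qed

lemma poly_op_pCons_0_1: "poly_op g [:0, 1:] v = g v"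
  by (simp add: poly_op_def)

lemma linear_coeff_zero_if_quadratic_nonpos:
  fixes a b :: real
  assumes "\<And>t. t * a + t\<^sup>2 * b \<le> 0"
  shows "a = 0"
proof (rule ccontr)
  assume "a \<noteq> 0"
  define s where "s = 1 / (\<bar>b\<bar> + 1)"
  have "0 < s"
    by (simp add: s_def add_pos_nonneg)
  have "\<bar>s * b\<bar> < 1"
    by (simp add: s_def abs_mult)
  then have "0 < s * a\<^sup>2 * (1 + s * b)"
    using \<open>0 < s\<close> \<open>a \<noteq> 0\<close> by (simp add: abs_less_iff)
  also have "\<dots> = (s * a) * a + (s * a)\<^sup>2 * b"
    by (simp add: power2_eq_square algebra_simps)
  also have "\<dots> \<le> 0"
    by (rule assms)
  finally show False
    by simp
qed

lemma rayleigh_quotient_attains_max: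
  fixes g :: "'a::euclidean_space \<Rightarrow> 'a"
  assumes lin: "linear g" and S: "subspace S" "S \<noteq> {0}"
  obtains u where "u \<in> S" "norm u = 1" "\<And>x. x \<in> S \<Longrightarrow> x \<bullet> g x \<le> (u \<bullet> g u) * (x \<bullet> x)"
proof -
  define K where "K = S \<inter> sphere 0 1"
  have normalize_in_K: "x /\<^sub>R norm x \<in> K" if "x \<in> S" "x \<noteq> 0" for x
    using that S by (auto simp: K_def subspace_scale)
  obtain y where "y \<in> S" "y \<noteq> 0"
    using S subspace_0 by blast
  then have "K \<noteq> {}"
    using normalize_in_K by blast
  moreover have "compact K"
    unfolding K_def by (intro closed_Int_compact closed_subspace S compact_sphere)
  moreover have "continuous_on K (\<lambda>x. x \<bullet> g x)"
    using lin by (intro continuous_intros linear_continuous_on linear_conv_bounded_linear[THEN iffD1])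
  ultimately obtain u where u: "u \<in> K" and max: "\<And>x. x \<in> K \<Longrightarrow> x \<bullet> g x \<le> u \<bullet> g u"
    using continuous_attains_sup[of K] by blast
  have "x \<bullet> g x \<le> (u \<bullet> g u) * (x \<bullet> x)" if "x \<in> S" for x
  proof (cases "x = 0")
    case True
    then show ?thesis
      using lin by (simp add: linear_0)
  next
    case False
    then have "(x \<bullet> g x) / (norm x)\<^sup>2 \<le> u \<bullet> g u"
      using max[OF normalize_in_K[OF that]]
      by (simp add: linear_scale[OF lin] power2_eq_square divide_inverse mult_ac)
    then show ?thesis
      using False by (simp add: pos_divide_le_eq dot_square_norm)
  qed
  with u that show thesis
    by (auto simp: K_def)
qed

lemma rayleigh_maximizer_is_eigenvector:
  fixes g :: "'a::real_inner \<Rightarrow> 'a"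
  assumes lin: "linear g" and sa: "\<And>x y. g x \<bullet> y = x \<bullet> g y"
    and S: "subspace S" "g ` S \<subseteq> S" and u: "u \<in> S" "u \<bullet> u = 1"
    and max: "\<And>x. x \<in> S \<Longrightarrow> x \<bullet> g x \<le> (u \<bullet> g u) * (x \<bullet> x)"
  shows "g u = (u \<bullet> g u) *\<^sub>R u"
proof -
  define l where "l = u \<bullet> g u"
  define z where "z = g u - l *\<^sub>R u"
  \<comment> \<open>first variation of the Rayleigh quotient at its maximiser \<open>u\<close> in direction \<open>w\<close>\<close>
  have "2 * (w \<bullet> z) = 0" if "w \<in> S" for w
  proof (rule linear_coeff_zero_if_quadratic_nonpos)
    fix t :: real
    have "u + t *\<^sub>R w \<in> S"
      using S u that by (simp add: subspace_add subspace_scale)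
    from max[OF this] show "t * (2 * (w \<bullet> z)) + t\<^sup>2 * (w \<bullet> g w - l * (w \<bullet> w)) \<le> 0"
      using sa[of u w] u
      by (simp add: z_def l_def linear_add[OF lin] linear_scale[OF lin] inner_add_left
          inner_add_right inner_diff_right power2_eq_square algebra_simps inner_commute)
  qed
  moreover have "z \<in> S"
    using S u by (auto simp: z_def subspace_diff subspace_scale)
  ultimately have "z \<bullet> z = 0"
    by simp
  then show ?thesis
    by (simp add: z_def l_def)
qed

lemma self_adjoint_invariant_subspace_has_eigenvector:
  fixes g :: "'a::euclidean_space \<Rightarrow> 'a"
  assumes "linear g" "\<And>x y. g x \<bullet> y = x \<bullet> g y" "subspace S" "g ` S \<subseteq> S" "S \<noteq> {0}"
  obtains u where "u \<in> S" "norm u = 1" "g u = (u \<bullet> g u) *\<^sub>R u"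
proof -
  obtain u where u: "u \<in> S" "norm u = 1"
    and max: "\<And>x. x \<in> S \<Longrightarrow> x \<bullet> g x \<le> (u \<bullet> g u) * (x \<bullet> x)"
    using rayleigh_quotient_attains_max[OF assms(1,3,5)] by blast
  moreover have "u \<bullet> u = 1"
    using u(2) by (simp add: norm_eq_1)
  ultimately show thesis
    using that rayleigh_maximizer_is_eigenvector[OF assms(1-4)] by blast
qed

lemma self_adjoint_invariant_orthogonal_comp:
  fixes g :: "'a::real_inner \<Rightarrow> 'a"
  assumes "\<And>x y. g x \<bullet> y = x \<bullet> g y" "g ` S \<subseteq> S" "g u = l *\<^sub>R u"
  shows "g ` (S \<inter> {u}\<^sup>\<bottom>) \<subseteq> S \<inter> {u}\<^sup>\<bottom>"
proof
  fix y
  assume "y \<in> g ` (S \<inter> {u}\<^sup>\<bottom>)"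
  then obtain w where w: "w \<in> S" "u \<bullet> w = 0" "y = g w"
    by (auto simp: orthogonal_comp_def orthogonal_def)
  have "u \<bullet> g w = l * (u \<bullet> w)"
    using assms(1)[of u w] assms(3) by simp
  then show "y \<in> S \<inter> {u}\<^sup>\<bottom>"
    using w assms(2) by (auto simp: orthogonal_comp_def orthogonal_def)
qed

lemma dim_Int_orthogonal_comp_less:
  fixes u :: "'a::euclidean_space"
  assumes "subspace S" "u \<in> S" "u \<noteq> 0"
  shows "dim (S \<inter> {u}\<^sup>\<bottom>) < dim S"
proof (rule dim_psubset)
  have "u \<notin> {u}\<^sup>\<bottom>"
    using assms(3) by (simp add: orthogonal_comp_def orthogonal_def)
  then have "S \<inter> {u}\<^sup>\<bottom> \<subset> S"
    using assms(2) by blast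
  moreover have "subspace (S \<inter> {u}\<^sup>\<bottom>)"
    by (intro subspace_inter assms(1) subspace_orthogonal_comp)
  ultimately show "span (S \<inter> {u}\<^sup>\<bottom>) \<subset> span S"
    using assms(1) by (simp add: span_eq_iff[THEN iffD2])
qed

lemma norm_add_orthogonal_le:
  fixes x y x' y' :: "'a::real_inner"
  assumes "orthogonal x y" "orthogonal x' y'" "norm x \<le> B * norm x'" "norm y \<le> B * norm y'" "0 \<le> B"
  shows "norm (x + y) \<le> B * norm (x' + y')"
proof -
  have "(norm (x + y))\<^sup>2 = (norm x)\<^sup>2 + (norm y)\<^sup>2"
    using assms(1) by (rule norm_add_Pythagorean)
  also have "\<dots> \<le> (B * norm x')\<^sup>2 + (B * norm y')\<^sup>2"
    using assms(3,4) by (intro add_mono power_mono) auto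
  also have "\<dots> = B\<^sup>2 * ((norm x')\<^sup>2 + (norm y')\<^sup>2)"
    by (simp add: power_mult_distrib distrib_left)
  also have "\<dots> = (B * norm (x' + y'))\<^sup>2"
    using norm_add_Pythagorean[OF assms(2)] by (simp add: power_mult_distrib)
  finally show ?thesis
    by (rule power2_le_imp_le) (use assms(5) in simp)
qed

lemma norm_poly_op_le_on_invariant_subspace:
  fixes g :: "'a::euclidean_space \<Rightarrow> 'a"
  assumes lin: "linear g" and sa: "\<And>x y. g x \<bullet> y = x \<bullet> g y"
    and psd: "\<And>x. 0 \<le> x \<bullet> g x" and le: "\<And>x. x \<bullet> g x \<le> \<rho> * (x \<bullet> x)"
    and B: "\<And>t. 0 \<le> t \<Longrightarrow> t \<le> \<rho> \<Longrightarrow> \<bar>poly p t\<bar> \<le> B" "0 \<le> B"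
    and S: "subspace S" "g ` S \<subseteq> S" "v \<in> S"
  shows "norm (poly_op g p v) \<le> B * norm v"
  using S
proof (induction "dim S" arbitrary: S v rule: less_induct)
  case less
  show ?case
  proof (cases "S = {0}")
    case True
    then show ?thesis
      using less.prems linear_0[OF linear_poly_op[OF lin]] by simp
  next
    case False
    then obtain u where u: "u \<in> S" "norm u = 1" and eig: "g u = (u \<bullet> g u) *\<^sub>R u"
      using self_adjoint_invariant_subspace_has_eigenvector[OF lin sa less.prems(1,2)] by blast
    define S' where "S' = S \<inter> {u}\<^sup>\<bottom>"
    define w where "w = v - (u \<bullet> v) *\<^sub>R u"
    have uu: "u \<bullet> u = 1"
      using u(2) by (simp add: norm_eq_1)
    have "subspace S'" "g ` S' \<subseteq> S'"
      unfolding S'_def using self_adjoint_invariant_orthogonal_comp[OF sa less.prems(2) eig]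
      by (auto intro: subspace_inter less.prems(1) subspace_orthogonal_comp)
    moreover have "w \<in> S'"
      using less.prems(1,3) u(1) uu
      by (simp add: S'_def w_def orthogonal_comp_def orthogonal_def subspace_diff subspace_scale
          inner_diff_right)
    moreover have "dim S' < dim S"
      unfolding S'_def using dim_Int_orthogonal_comp_less less.prems(1) u by force
    ultimately have IH: "norm (poly_op g p w) \<le> B * norm w"
      using less.hyps by blast
    have "poly_op g p v = ((u \<bullet> v) * poly p (u \<bullet> g u)) *\<^sub>R u + poly_op g p w"
      using linear_poly_op[OF lin] poly_op_eigenvector[OF lin eig]
      by (simp add: w_def linear_diff linear_scale)
    also have "norm \<dots> \<le> B * norm ((u \<bullet> v) *\<^sub>R u + w)"
    proof (rule norm_add_orthogonal_le)
      have "poly_op g p w \<in> S'"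
        by (rule poly_op_in_subspace) fact+
      then show "orthogonal (((u \<bullet> v) * poly p (u \<bullet> g u)) *\<^sub>R u) (poly_op g p w)"
        by (simp add: S'_def orthogonal_comp_def orthogonal_def)
      show "orthogonal ((u \<bullet> v) *\<^sub>R u) w"
        using \<open>w \<in> S'\<close> by (simp add: S'_def orthogonal_comp_def orthogonal_def)
      have "\<bar>poly p (u \<bullet> g u)\<bar> \<le> B"
        using B(1) psd le[of u] uu by simp
      then show "norm (((u \<bullet> v) * poly p (u \<bullet> g u)) *\<^sub>R u) \<le> B * norm ((u \<bullet> v) *\<^sub>R u)"
        using u(2) by (simp add: abs_mult mult.commute[of B] mult_left_mono)
    qed (fact IH B(2))+
    finally show ?thesis
      by (simp add: w_def)
  qed
qed

lemma norm_poly_op_le: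
  fixes g :: "'a::euclidean_space \<Rightarrow> 'a"
  assumes "linear g" "\<And>x y. g x \<bullet> y = x \<bullet> g y"
    and "\<And>x. 0 \<le> x \<bullet> g x" "\<And>x. x \<bullet> g x \<le> \<rho> * (x \<bullet> x)"
    and "\<And>t. 0 \<le> t \<Longrightarrow> t \<le> \<rho> \<Longrightarrow> \<bar>poly p t\<bar> \<le> B" "0 \<le> B"
  shows "norm (poly_op g p v) \<le> B * norm v"
  using norm_poly_op_le_on_invariant_subspace[OF assms subspace_UNIV] by simp

lemma norm_self_adjoint_le:
  fixes g :: "'a::euclidean_space \<Rightarrow> 'a"
  assumes "linear g" "\<And>x y. g x \<bullet> y = x \<bullet> g y"
    and "\<And>x. 0 \<le> x \<bullet> g x" "\<And>x. x \<bullet> g x \<le> \<rho> * (x \<bullet> x)" "0 \<le> \<rho>"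
  shows "norm (g v) \<le> \<rho> * norm v"
  using norm_poly_op_le[OF assms(1-4), of "[:0, 1:]" \<rho>] assms(5) by (simp add: poly_op_pCons_0_1)

lemma abs_poly_le_sup_on_interval:
  assumes "0 \<le> t" "t \<le> \<rho>"
  shows "\<bar>poly p t\<bar> \<le> sup_on_interval \<rho> p"
proof -
  have "compact ((\<lambda>x. \<bar>poly p x\<bar>) ` {0..\<rho>})"
    by (intro compact_continuous_image continuous_intros) auto
  then have "bdd_above ((\<lambda>x. \<bar>poly p x\<bar>) ` {0..\<rho>})"
    by (intro bounded_imp_bdd_above compact_imp_bounded)
  then show ?thesis
    unfolding sup_on_interval_def by (rule cSUP_upper2) (use assms in auto)
qed

lemma norm_poly_op_le_sup_on_interval:
  fixes g :: "'a::euclidean_space \<Rightarrow> 'a"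
  assumes "linear g" "\<And>x y. g x \<bullet> y = x \<bullet> g y"
    and "\<And>x. 0 \<le> x \<bullet> g x" "\<And>x. x \<bullet> g x \<le> \<rho> * (x \<bullet> x)" "0 \<le> \<rho>"
  shows "norm (poly_op g p v) \<le> sup_on_interval \<rho> p * norm v"
proof (rule norm_poly_op_le[OF assms(1-4)])
  show "0 \<le> sup_on_interval \<rho> p"
    using abs_poly_le_sup_on_interval[of 0 \<rho> p] assms(5) by linarith
qed (fact abs_poly_le_sup_on_interval)

lemma norm_weighted_sum_le:
  fixes v :: "nat \<Rightarrow> 'a::real_normed_vector"
  assumes "\<And>i. i \<le> k \<Longrightarrow> norm (v i) \<le> b" "(\<Sum>i\<le>k. \<bar>c i\<bar>) \<le> C" "0 \<le> b"
  shows "norm (\<Sum>i\<le>k. c i *\<^sub>R v i) \<le> C * b"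
proof -
  have "norm (\<Sum>i\<le>k. c i *\<^sub>R v i) \<le> (\<Sum>i\<le>k. \<bar>c i\<bar> * norm (v i))"
    using norm_sum[of "\<lambda>i. c i *\<^sub>R v i" "{..k}"] by simp
  also have "\<dots> \<le> (\<Sum>i\<le>k. \<bar>c i\<bar>) * b"
    unfolding sum_distrib_right by (intro sum_mono mult_left_mono) (simp_all add: assms(1))
  also have "\<dots> \<le> C * b"
    using assms(2,3) by (rule mult_right_mono)
  finally show ?thesis .
qed

lemma caa_feasible_coeff:
  assumes "poly_feasible C k p"
  shows "caa_feasible C k (coeff p)"
proof -
  have deg: "degree p \<le> k" and "poly p 1 = 1" "poly_l1 p \<le> C"
    using assms by (auto simp: poly_feasible_def)
  moreover have "(\<Sum>i\<le>k. coeff p i) = (\<Sum>i\<le>degree p. coeff p i)"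
    using deg by (rule sum_le_degree_extend)
  moreover have "(\<Sum>i\<le>k. \<bar>coeff p i\<bar>) = (\<Sum>i\<le>degree p. \<bar>coeff p i\<bar>)"
    using deg by (rule sum_le_degree_extend) simp
  ultimately show ?thesis
    by (simp add: caa_feasible_def poly_l1_def poly_altdef)
qed

lemma caa_iter_0 [simp]: "caa_iter F x0 0 = x0"
  by (simp add: caa_iter_def)

lemma caa_iter_Suc [simp]: "caa_iter F x0 (Suc i) = F (caa_iter F x0 i)"
  by (simp add: caa_iter_def)

lemma norm_caa_iter_step_le:
  fixes F :: "'a::real_normed_vector \<Rightarrow> 'a"
  assumes lip: "L-lipschitz_on UNIV F" and "L \<le> 1"
  shows "norm (caa_iter F x0 i - caa_iter F x0 (Suc i)) \<le> norm (F x0 - x0)"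
proof (induction i)
  case 0
  show ?case
    by (simp add: norm_minus_commute)
next
  case (Suc i)
  let ?d = "norm (caa_iter F x0 i - caa_iter F x0 (Suc i))"
  have "norm (caa_iter F x0 (Suc i) - caa_iter F x0 (Suc (Suc i))) \<le> L * ?d"
    using lipschitz_onD[OF lip] by (simp add: dist_norm)
  also have "\<dots> \<le> ?d"
    using lipschitz_on_nonneg[OF lip] \<open>L \<le> 1\<close> by (simp add: mult_left_le_one_le)
  finally show ?case
    using Suc by linarith
qed

lemma norm_caa_iter_diff_le:
  fixes F :: "'a::real_normed_vector \<Rightarrow> 'a"
  assumes "L-lipschitz_on UNIV F" and "L \<le> 1"
  shows "norm (caa_iter F x0 i - x0) \<le> real i * norm (F x0 - x0)"
proof (induction i)
  case (Suc i)
  have "norm (caa_iter F x0 (Suc i) - x0)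
      \<le> norm (caa_iter F x0 i - x0) + norm (caa_iter F x0 i - caa_iter F x0 (Suc i))"
    using norm_triangle_ineq4[of "caa_iter F x0 i - x0" "caa_iter F x0 i - caa_iter F x0 (Suc i)"]
    by simp
  then show ?case
    using Suc norm_caa_iter_step_le[OF assms, of x0 i] by (simp add: algebra_simps)
qed simp

lemma norm_perturbed_iterate_le:
  fixes g :: "'a::real_normed_vector \<Rightarrow> 'a"
  assumes lin: "linear g" and nonexp: "\<And>v. norm (g v) \<le> norm v"
    and pert: "\<And>i. norm (r (Suc i) - g (r i)) \<le> \<epsilon>"
  shows "norm (r i - (g ^^ i) (r 0)) \<le> real i * \<epsilon>"
proof (induction i)
  case (Suc i)
  have "r (Suc i) - (g ^^ Suc i) (r 0) = g (r i - (g ^^ i) (r 0)) + (r (Suc i) - g (r i))"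
    using lin by (simp add: linear_diff)
  then have "norm (r (Suc i) - (g ^^ Suc i) (r 0))
      \<le> norm (g (r i - (g ^^ i) (r 0))) + norm (r (Suc i) - g (r i))"
    by (metis norm_triangle_ineq)
  also have "\<dots> \<le> real i * \<epsilon> + \<epsilon>"
    using Suc nonexp pert by (meson add_mono order_trans)
  finally show ?case
    by (simp add: algebra_simps)
qed simp

lemma norm_caa_residual_coeff_le:
  fixes F \<xi> g :: "'a::euclidean_space \<Rightarrow> 'a"
  assumes lin: "linear g" and sa: "\<And>x y. g x \<bullet> y = x \<bullet> g y"
    and psd: "\<And>x. 0 \<le> x \<bullet> g x" and le: "\<And>x. x \<bullet> g x \<le> \<rho> * (x \<bullet> x)" and "\<rho> \<le> 1"
    and F_lip: "\<rho>-lipschitz_on UNIV F" and \<xi>_lip: "\<alpha>-lipschitz_on UNIV \<xi>"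
    and F_eq: "\<And>x. F x = g x + \<xi> x" and p: "poly_feasible C k p"
  shows "norm (caa_residual F x0 k (coeff p))
           \<le> (sup_on_interval \<rho> p + C * real k * \<alpha>) * norm (F x0 - x0)"
proof -
  define x where "x = caa_iter F x0"
  define r where "r i = x i - x (Suc i)" for i
  define N where "N = norm (F x0 - x0)"
  have deg: "degree p \<le> k" and l1: "(\<Sum>i\<le>k. \<bar>coeff p i\<bar>) \<le> C"
    using p caa_feasible_coeff[OF p] by (auto simp: poly_feasible_def caa_feasible_def)
  have "0 \<le> \<rho>" "0 \<le> \<alpha>"
    using F_lip \<xi>_lip by (auto intro: lipschitz_on_nonneg)
  have r0: "norm (r 0) = N"
    by (simp add: r_def x_def N_def norm_minus_commute)
  have pert: "norm (r (Suc i) - g (r i)) \<le> \<alpha> * N" for i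
  proof -
    have "r (Suc i) - g (r i) = \<xi> (x i) - \<xi> (x (Suc i))"
      using lin by (simp add: r_def x_def F_eq linear_diff)
    then have "norm (r (Suc i) - g (r i)) \<le> \<alpha> * norm (r i)"
      using lipschitz_onD[OF \<xi>_lip] by (simp add: r_def dist_norm)
    also have "\<dots> \<le> \<alpha> * N"
      using norm_caa_iter_step_le[OF F_lip \<open>\<rho> \<le> 1\<close>] \<open>0 \<le> \<alpha>\<close>
      by (simp add: r_def x_def N_def mult_left_mono)
    finally show ?thesis .
  qed
  have nonexp: "norm (g v) \<le> norm v" for v
    using norm_self_adjoint_le[OF lin sa psd le \<open>0 \<le> \<rho>\<close>, of v] \<open>0 \<le> \<rho>\<close> \<open>\<rho> \<le> 1\<close>
    by (meson mult_left_le_one_le norm_ge_zero order_trans)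
  have dev: "norm (r i - (g ^^ i) (r 0)) \<le> real k * (\<alpha> * N)" if "i \<le> k" for i
  proof -
    have "real i * (\<alpha> * N) \<le> real k * (\<alpha> * N)"
      using that \<open>0 \<le> \<alpha>\<close> by (intro mult_right_mono) (simp_all add: N_def)
    then show ?thesis
      using norm_perturbed_iterate_le[where r = r, OF lin nonexp pert, of i] by linarith
  qed
  have "caa_residual F x0 k (coeff p)
      = poly_op g p (r 0) + (\<Sum>i\<le>k. coeff p i *\<^sub>R (r i - (g ^^ i) (r 0)))"
    by (simp add: caa_residual_def poly_op_eq_sum[OF deg] r_def x_def scaleR_diff_right
        sum_subtractf)
  also have "norm \<dots> \<le> norm (poly_op g p (r 0)) + norm (\<Sum>i\<le>k. coeff p i *\<^sub>R (r i - (g ^^ i) (r 0)))"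
    by (rule norm_triangle_ineq)
  also have "\<dots> \<le> sup_on_interval \<rho> p * N + C * (real k * (\<alpha> * N))"
    using norm_poly_op_le_sup_on_interval[OF lin sa psd le \<open>0 \<le> \<rho>\<close>, of p "r 0"] r0 \<open>0 \<le> \<alpha>\<close>
    by (intro add_mono norm_weighted_sum_le[OF dev l1]) (simp_all add: N_def)
  finally show ?thesis
    by (simp add: N_def algebra_simps)
qed

lemma caa_output_fixed_point_residual_eq:
  fixes F \<xi> g :: "'a::real_vector \<Rightarrow> 'a"
  assumes "linear g" "\<And>x. F x = g x + \<xi> x"
  shows "F (caa_output F x0 k c) - caa_output F x0 k c
       = (\<xi> (caa_output F x0 k c) - (\<Sum>i\<le>k. c i *\<^sub>R \<xi> (caa_iter F x0 i)))
         - caa_residual F x0 k c"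
  using assms(1)
  by (simp add: assms(2) caa_output_def caa_residual_def linear_sum linear_scale
      scaleR_diff_right scaleR_add_right sum_subtractf sum.distrib)

lemma norm_caa_output_fixed_point_residual_le:
  fixes F \<xi> g :: "'a::real_normed_vector \<Rightarrow> 'a"
  assumes lin: "linear g" and F_eq: "\<And>x. F x = g x + \<xi> x"
    and \<xi>_lip: "\<alpha>-lipschitz_on UNIV \<xi>" and F_lip: "L-lipschitz_on UNIV F" and "L \<le> 1"
    and c: "caa_feasible C k c"
  shows "norm (F (caa_output F x0 k c) - caa_output F x0 k c)
           \<le> norm (caa_residual F x0 k c) + 2 * C * \<alpha> * real k * norm (F x0 - x0)"
proof -
  define x where "x = caa_iter F x0"
  define xe where "xe = caa_output F x0 k c"
  define N where "N = norm (F x0 - x0)"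
  have csum: "(\<Sum>i\<le>k. c i) = 1" and cl1: "(\<Sum>i\<le>k. \<bar>c i\<bar>) \<le> C"
    using c by (auto simp: caa_feasible_def)
  have "0 \<le> \<alpha>"
    using \<xi>_lip by (rule lipschitz_on_nonneg)
  have N0: "0 \<le> N"
    by (simp add: N_def)
  have \<xi>_le: "norm (\<xi> a - \<xi> b) \<le> \<alpha> * norm (a - b)" for a b
    using lipschitz_onD[OF \<xi>_lip] by (simp add: dist_norm)
  have affine: "(\<Sum>i\<le>k. c i *\<^sub>R z) = z" for z :: 'a
    using csum by (simp flip: scaleR_sum_left)
  have x_le: "norm (x i - x0) \<le> real k * N" if "i \<le> k" for i
  proof -
    have "real i * N \<le> real k * N"
      using that by (intro mult_right_mono) (simp_all add: N_def)
    then show ?thesis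
      using norm_caa_iter_diff_le[OF F_lip \<open>L \<le> 1\<close>, of x0 i] unfolding x_def N_def by linarith
  qed
  have "xe - x0 = (\<Sum>i\<le>k. c i *\<^sub>R (x i - x0))"
    by (simp add: xe_def x_def caa_output_def scaleR_diff_right sum_subtractf affine)
  then have xe_le: "norm (xe - x0) \<le> C * (real k * N)"
    using norm_weighted_sum_le[OF x_le cl1] by (simp add: N_def)
  have "norm (\<xi> xe - (\<Sum>i\<le>k. c i *\<^sub>R \<xi> (x i)))
      = norm ((\<xi> xe - \<xi> x0) - (\<Sum>i\<le>k. c i *\<^sub>R (\<xi> (x i) - \<xi> x0)))"
    by (simp add: scaleR_diff_right sum_subtractf affine)
  also have "\<dots> \<le> norm (\<xi> xe - \<xi> x0) + norm (\<Sum>i\<le>k. c i *\<^sub>R (\<xi> (x i) - \<xi> x0))"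
    by (rule norm_triangle_ineq4)
  also have "\<dots> \<le> \<alpha> * (C * (real k * N)) + C * (\<alpha> * (real k * N))"
  proof (rule add_mono)
    show "norm (\<xi> xe - \<xi> x0) \<le> \<alpha> * (C * (real k * N))"
      using \<xi>_le[of xe x0] xe_le \<open>0 \<le> \<alpha>\<close> by (meson mult_left_mono order_trans)
    have "norm (\<xi> (x i) - \<xi> x0) \<le> \<alpha> * (real k * N)" if "i \<le> k" for i
      using \<xi>_le[of "x i" x0] mult_left_mono[OF x_le[OF that] \<open>0 \<le> \<alpha>\<close>] by linarith
    then show "norm (\<Sum>i\<le>k. c i *\<^sub>R (\<xi> (x i) - \<xi> x0)) \<le> C * (\<alpha> * (real k * N))"
      by (rule norm_weighted_sum_le[OF _ cl1]) (use \<open>0 \<le> \<alpha>\<close> N0 in auto)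
  qed
  also have "\<dots> = 2 * C * \<alpha> * real k * N"
    by (simp add: algebra_simps)
  finally have "norm (\<xi> xe - (\<Sum>i\<le>k. c i *\<^sub>R \<xi> (x i))) \<le> 2 * C * \<alpha> * real k * N" .
  moreover have "norm (F xe - xe)
      \<le> norm (\<xi> xe - (\<Sum>i\<le>k. c i *\<^sub>R \<xi> (x i))) + norm (caa_residual F x0 k c)"
    using caa_output_fixed_point_residual_eq[OF lin F_eq, of x0 k c] norm_triangle_ineq4
    by (simp add: xe_def x_def)
  ultimately show ?thesis
    by (simp add: xe_def N_def)
qed

theorem proposition2:
  fixes F \<xi> :: "real^'n \<Rightarrow> real^'n"
    and G :: "real^'n^'n"
    and \<rho> \<alpha> C :: real and k :: nat and x0 :: "real^'n"
    and c :: "nat \<Rightarrow> real" and p :: "real poly"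
  assumes rho: "0 < \<rho>" "\<rho> < 1"
    and alpha: "0 \<le> \<alpha>"
    and F_lip: "\<rho>-lipschitz_on UNIV F"
    and G_sym: "transpose G = G"
    and G_psd: "\<And>x. 0 \<le> x \<bullet> (G *v x)"
    and G_le: "\<And>x. x \<bullet> (G *v x) \<le> \<rho> * (x \<bullet> x)"
    and xi_lip: "\<alpha>-lipschitz_on UNIV \<xi>"
    and F_decomp: "\<And>x. F x = G *v x + \<xi> x"
    and C: "1 \<le> C"
    and k: "1 \<le> k"
    and c_min: "caa_argmin F x0 C k c"
    and p_feas: "poly_feasible C k p"
    and p_min: "\<And>q. poly_feasible C k q \<Longrightarrow> sup_on_interval \<rho> p \<le> sup_on_interval \<rho> q"
  shows "norm (F (caa_output F x0 k c) - caa_output F x0 k c)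
           \<le> (sup_on_interval \<rho> p + 3 * C * \<alpha> * real k) * norm (F x0 - x0)"
proof -
  \<comment> \<open>The bound holds for every feasible \<open>p\<close>.\<close>
  have lin: "linear ((*v) G)"
    by (rule matrix_vector_mul_linear)
  have sa: "(G *v x) \<bullet> y = x \<bullet> (G *v y)" for x y
    by (metis G_sym dot_lmul_matrix vector_transpose_matrix)
  have c_feas: "caa_feasible C k c"
    and c_le: "norm (caa_residual F x0 k c) \<le> norm (caa_residual F x0 k (coeff p))"
    using c_min caa_feasible_coeff[OF p_feas] by (auto simp: caa_argmin_def)
  have "norm (F (caa_output F x0 k c) - caa_output F x0 k c)
      \<le> norm (caa_residual F x0 k c) + 2 * C * \<alpha> * real k * norm (F x0 - x0)"
    using rho by (intro norm_caa_output_fixed_point_residual_le[OF lin F_decomp xi_lip F_lip _ c_feas])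
      simp
  also have "\<dots> \<le> (sup_on_interval \<rho> p + C * real k * \<alpha>) * norm (F x0 - x0)
                  + 2 * C * \<alpha> * real k * norm (F x0 - x0)"
    using c_le norm_caa_residual_coeff_le[OF lin sa G_psd G_le _ F_lip xi_lip F_decomp p_feas, of x0]
      rho by simp
  also have "\<dots> = (sup_on_interval \<rho> p + 3 * C * \<alpha> * real k) * norm (F x0 - x0)"
    by (simp add: algebra_simps)
  finally show ?thesis .
qed

end
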